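(* Let $\varphi:[1,\infty]\to[1,\infty]$ be an admissible function, with constants $\gamma,\beta>0$ as in the definition below. Then for every $x\in\mathbb R$ and every $1\le q_0<\infty$, $$ \inf_{q\in[q_0,\infty)}\varphi(q)e^{-\frac{x}{q}}\le \begin{cases} \varphi(q_0)e^{-\frac{x}{q_0}}, & \text{if } x\ge 0,\\[2pt] q_0^{\beta}e^{\frac{1}{q_0}}\varphi(1-x), & \text{if } x<0. \end{cases} $$
   Context: A function $\varphi:[1,\infty]\to[1,\infty]$ is called admissible if (a) $\varphi(1)=1$ and $\varphi$ is log-concave, i.e. $\theta\log\varphi(x)+(1-\theta)\log\varphi(y)\le\log\varphi(\theta x+(1-\theta)y)$ for all $x,y\ge1$, $0\le\theta\le1$; and (b) there exist $\gamma,\beta>0$ such that for every $x\ge1$, $\frac{\gamma}{x}\le\frac{\varphi'(x)}{\varphi(x)}\le\frac{\beta}{x}$. *)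

theory Defs
  imports "HOL-Analysis.Analysis"
begin

text \<open>Admissible function with constants gamma, beta. The value at infinity is
irrelevant for the statement, so phi is modelled on [1, infinity) as a real function.\<close>
definition admissible :: "(real \<Rightarrow> real) \<Rightarrow> real \<Rightarrow> real \<Rightarrow> bool" where
  "admissible \<phi> \<gamma> \<beta> \<longleftrightarrow>
     \<gamma> > 0 \<and> \<beta> > 0 \<and> \<phi> 1 = 1 \<and> (\<forall>x\<ge>1. \<phi> x \<ge> 1) \<and>
     (\<forall>x y \<theta>. x \<ge> 1 \<longrightarrow> y \<ge> 1 \<longrightarrow> 0 \<le> \<theta> \<longrightarrow> \<theta> \<le> 1 \<longrightarrow>
        \<theta> * ln (\<phi> x) + (1 - \<theta>) * ln (\<phi> y) \<le> ln (\<phi> (\<theta> * x + (1 - \<theta>) * y))) \<and>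
     (\<exists>\<phi>'. \<forall>x\<ge>1. (\<phi> has_real_derivative \<phi>' x) (at x within {1..}) \<and>
        \<gamma> / x \<le> \<phi>' x / \<phi> x \<and> \<phi>' x / \<phi> x \<le> \<beta> / x)"

end

theory Submission
  imports Defs
begin

text \<open>For \<open>x < 0\<close> the infimum is tested at \<open>q = q\<^sub>0 (1 - x)\<close>: there
\<open>-x / q \<le> 1 / q\<^sub>0\<close>, and the logarithmic derivative bound \<open>\<phi>' u / \<phi> u \<le> \<beta> / u\<close> says that
\<open>ln \<phi> - \<beta> ln\<close> is nonincreasing, whence \<open>\<phi> (c t) \<le> c\<^sup>\<beta> \<phi> t\<close> for \<open>c \<ge> 1\<close>.\<close>

lemma log_derivative_le_imp_powr_growth:
  fixes f f' :: "real \<Rightarrow> real" and a \<beta> s t :: real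
  assumes "0 < a"
    and f_pos: "\<And>u. a \<le> u \<Longrightarrow> 0 < f u"
    and f_deriv: "\<And>u. a \<le> u \<Longrightarrow> (f has_real_derivative f' u) (at u within {a..})"
    and log_deriv: "\<And>u. a \<le> u \<Longrightarrow> f' u / f u \<le> \<beta> / u"
    and "a \<le> s" "s \<le> t"
  shows "f t \<le> (t / s) powr \<beta> * f s"
proof -
  define g where "g u = \<beta> * ln u - ln (f u)" for u
  have g_deriv: "(g has_real_derivative \<beta> / u - f' u / f u) (at u within {a..})"
    if "a \<le> u" for u
    unfolding g_def
    using f_deriv[OF that] f_pos[OF that] \<open>0 < a\<close> that
    by (auto intro!: derivative_eq_intros simp: field_simps)
  have "g s \<le> g t"
  proof (rule DERIV_nonneg_imp_increasing_open[OF \<open>s \<le> t\<close>])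
    have "continuous_on {a..} g"
      unfolding continuous_on_eq_continuous_within
      using g_deriv DERIV_continuous by blast
    then show "continuous_on {s..t} g"
      by (rule continuous_on_subset) (use \<open>a \<le> s\<close> in auto)
  next
    fix u assume "s < u" "u < t"
    then have "a < u" using \<open>a \<le> s\<close> by simp
    then have "at u within {a..} = at u"
      by (intro at_within_interior) auto
    then show "\<exists>y. (g has_real_derivative y) (at u) \<and> 0 \<le> y"
      using g_deriv[of u] log_deriv[of u] \<open>a < u\<close> by auto
  qed
  then have "ln (f t) \<le> ln (f s) + \<beta> * (ln t - ln s)"
    unfolding g_def by (simp add: algebra_simps)
  also have "\<dots> = ln ((t / s) powr \<beta> * f s)"
    using \<open>0 < a\<close> \<open>a \<le> s\<close> \<open>s \<le> t\<close> f_pos[of s] by (simp add: ln_mult ln_div algebra_simps)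
  finally show ?thesis
    using \<open>0 < a\<close> \<open>a \<le> s\<close> \<open>s \<le> t\<close> f_pos[of s] f_pos[of t] by simp
qed

lemma admissible_scaling_bound:
  fixes \<phi> :: "real \<Rightarrow> real" and \<gamma> \<beta> c t :: real
  assumes "admissible \<phi> \<gamma> \<beta>" and "1 \<le> c" and "1 \<le> t"
  shows "\<phi> (c * t) \<le> c powr \<beta> * \<phi> t"
proof -
  obtain \<phi>' where \<phi>'_deriv: "\<And>u. 1 \<le> u \<Longrightarrow> (\<phi> has_real_derivative \<phi>' u) (at u within {1..})"
      and \<phi>'_le: "\<And>u. 1 \<le> u \<Longrightarrow> \<phi>' u / \<phi> u \<le> \<beta> / u"
    using assms(1) unfolding admissible_def by blast
  have "\<phi> (c * t) \<le> (c * t / t) powr \<beta> * \<phi> t"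
  proof (rule log_derivative_le_imp_powr_growth[OF _ _ \<phi>'_deriv \<phi>'_le])
    show "\<And>u. 1 \<le> u \<Longrightarrow> 0 < \<phi> u"
      using assms(1) unfolding admissible_def by (meson less_le_trans zero_less_one)
    show "t \<le> c * t"
      using assms(2,3) by simp
  qed (use assms(3) in auto)
  then show ?thesis
    using assms(3) by simp
qed

lemma admissible_Inf_le:
  fixes \<phi> :: "real \<Rightarrow> real" and \<gamma> \<beta> x q\<^sub>0 q :: real
  assumes "admissible \<phi> \<gamma> \<beta>" and "1 \<le> q\<^sub>0" and "q\<^sub>0 \<le> q"
  shows "Inf ((\<lambda>q. \<phi> q * exp (- x / q)) ` {q\<^sub>0..}) \<le> \<phi> q * exp (- x / q)"
proof (rule cInf_lower)
  have "0 \<le> \<phi> p * exp (- x / p)" if "q\<^sub>0 \<le> p" for p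
    using assms(1,2) that unfolding admissible_def by (simp add: order_trans[OF zero_le_one])
  then show "bdd_below ((\<lambda>q. \<phi> q * exp (- x / q)) ` {q\<^sub>0..})"
    by (intro bdd_belowI[of _ 0]) auto
qed (use assms(3) in auto)

theorem mainTheorem1:
  fixes \<phi> :: "real \<Rightarrow> real" and \<gamma> \<beta> x q\<^sub>0 :: real
  assumes "admissible \<phi> \<gamma> \<beta>" and "1 \<le> q\<^sub>0"
  shows "Inf ((\<lambda>q. \<phi> q * exp (- x / q)) ` {q\<^sub>0..}) \<le>
           (if x \<ge> 0 then \<phi> q\<^sub>0 * exp (- x / q\<^sub>0)
            else q\<^sub>0 powr \<beta> * exp (1 / q\<^sub>0) * \<phi> (1 - x))"
proof (cases "x \<ge> 0")
  case True
  then show ?thesis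
    using admissible_Inf_le[OF assms order_refl] by simp
next
  case False
  define q where "q = q\<^sub>0 * (1 - x)"
  have "q\<^sub>0 \<le> q"
    unfolding q_def using False assms(2) by (simp add: mult_le_cancel_left1)
  have "- x / q \<le> 1 / q\<^sub>0"
    unfolding q_def using False assms(2) by (simp add: divide_simps)
  have "Inf ((\<lambda>q. \<phi> q * exp (- x / q)) ` {q\<^sub>0..}) \<le> \<phi> q * exp (- x / q)"
    by (rule admissible_Inf_le[OF assms \<open>q\<^sub>0 \<le> q\<close>])
  also have "\<dots> \<le> q\<^sub>0 powr \<beta> * \<phi> (1 - x) * exp (1 / q\<^sub>0)"
  proof (rule mult_mono)
    show "\<phi> q \<le> q\<^sub>0 powr \<beta> * \<phi> (1 - x)"
      unfolding q_def using admissible_scaling_bound[OF assms(1,2)] False by simp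
    show "0 \<le> q\<^sub>0 powr \<beta> * \<phi> (1 - x)"
      using assms(1) False unfolding admissible_def by (simp add: order_trans[OF zero_le_one])
  qed (use \<open>- x / q \<le> 1 / q\<^sub>0\<close> in auto)
  finally show ?thesis
    using False by (simp add: mult_ac)
qed

end
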